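(* Let $X$ be a compact metrizable space, $\Delta$ a weak*-closed set of Borel probability measures on $X$, and $\varepsilon>0$. Let $f,g\colon X\to\mathbb R$ be continuous with $\|f-g\|_{2,\Delta}^2<\varepsilon^3/8$ and $\mu(g^{-1}(0))<\varepsilon/2$ for all $\mu\in\Delta$. Then there is a continuous $g'\colon X\to\mathbb R$ such that $\|f-g'\|_\infty<\varepsilon$ and $\mu((g')^{-1}(0))<\varepsilon$ for all $\mu\in\Delta$.
   Context: $\|h\|_{2,\Delta}=\sup\{(\int|h|^2d\mu)^{1/2}:\mu\in\Delta\}$ for $h\in\mathrm{C}(X)$. *)

theory Defs
  imports "HOL-Probability.Probability"
begin

definition borel_prob_measures :: "'a::topological_space measure set" where
  "borel_prob_measures = {M. sets M = sets borel \<and> prob_space M}"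

definition weak_star_topology :: "'a::topological_space measure topology" where
  "weak_star_topology = topology_generated_by
     {{M \<in> borel_prob_measures. (\<integral>x. f x \<partial>M) \<in> U} | f U.
        continuous_on UNIV (f :: 'a \<Rightarrow> real) \<and> open U}"

definition norm2Delta :: "'a::topological_space measure set \<Rightarrow> ('a \<Rightarrow> real) \<Rightarrow> real" where
  "norm2Delta \<Delta> h = (SUP \<mu>\<in>\<Delta>. sqrt (\<integral>x. \<bar>h x\<bar>^2 \<partial>\<mu>))"

definition sup_norm :: "('a \<Rightarrow> real) \<Rightarrow> real" where
  "sup_norm h = (SUP x. \<bar>h x\<bar>)"

end

theory Submission
  imports Defs
begin

text \<open>Correct g by the clipped difference: g' = f - max (-c) (min c (f - g)) with c = \<epsilon>/2.
  Then f - g' is bounded by c, and g' agrees with g wherever |f - g| < c, so every zero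
  of g' is a zero of g or a point where |f - g| \<ge> c. By Chebyshev's inequality the latter
  set has \<mu>-measure at most ||f - g||_{2,\<Delta>}^2 / c^2 < \<epsilon>/2 for every \<mu> \<in> \<Delta>.\<close>

lemma borel_prob_measuresD:
  assumes "M \<in> borel_prob_measures"
  shows "prob_space M" and "sets M = sets borel" and "space M = UNIV"
    and "measurable M N = measurable borel N"
  using assms sets_eq_imp_space_eq[of M borel] measurable_cong_sets[of M borel N N]
  by (auto simp: borel_prob_measures_def)

lemma sup_norm_le:
  assumes "\<And>x. \<bar>h x\<bar> \<le> c"
  shows "sup_norm h \<le> c"
  unfolding sup_norm_def by (rule cSUP_least) (use assms in auto)

lemma integrable_square_of_bounded:
  fixes h :: "'a::topological_space \<Rightarrow> real"
  assumes M: "M \<in> borel_prob_measures"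
    and h: "h \<in> borel_measurable borel" and bound: "\<And>x. \<bar>h x\<bar> \<le> B"
  shows "integrable M (\<lambda>x. (h x)\<^sup>2)"
proof -
  interpret prob_space M
    using M by (rule borel_prob_measuresD)
  have "h \<in> borel_measurable M"
    using h by (simp add: borel_prob_measuresD(4)[OF M])
  then have "(\<lambda>x. (h x)\<^sup>2) \<in> borel_measurable M"
    by measurable
  then show ?thesis
    by (rule integrable_const_bound[where B = "B\<^sup>2", rotated])
      (simp add: power_mono[OF bound abs_ge_zero, of _ 2, simplified])
qed

lemma integral_square_le_norm2Delta:
  fixes h :: "'a::topological_space \<Rightarrow> real"
  assumes \<Delta>: "\<Delta> \<subseteq> borel_prob_measures" and \<mu>: "\<mu> \<in> \<Delta>"
    and h: "h \<in> borel_measurable borel" and bound: "\<And>x. \<bar>h x\<bar> \<le> B"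
  shows "(\<integral>x. (h x)\<^sup>2 \<partial>\<mu>) \<le> (norm2Delta \<Delta> h)\<^sup>2"
proof -
  have integral_le: "(\<integral>x. (h x)\<^sup>2 \<partial>\<nu>) \<le> B\<^sup>2" if "\<nu> \<in> \<Delta>" for \<nu>
  proof -
    have \<nu>_prob: "\<nu> \<in> borel_prob_measures"
      using \<Delta> that by blast
    interpret prob_space \<nu>
      using \<nu>_prob by (rule borel_prob_measuresD)
    have "(\<integral>x. (h x)\<^sup>2 \<partial>\<nu>) \<le> (\<integral>x. B\<^sup>2 \<partial>\<nu>)"
      using integrable_square_of_bounded[OF \<nu>_prob h bound]
      by (rule integral_mono) (simp_all add: power_mono[OF bound abs_ge_zero, of _ 2, simplified])
    then show ?thesis
      by (simp add: prob_space)
  qed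
  have "bdd_above ((\<lambda>\<nu>. sqrt (\<integral>x. (h x)\<^sup>2 \<partial>\<nu>)) ` \<Delta>)"
    by (rule bdd_aboveI2[where M = "sqrt (B\<^sup>2)"], rule real_sqrt_le_mono, rule integral_le)
  then have "sqrt (\<integral>x. (h x)\<^sup>2 \<partial>\<mu>) \<le> norm2Delta \<Delta> h"
    unfolding norm2Delta_def power2_abs by (rule cSUP_upper[OF \<mu>])
  then show ?thesis
    by (rule sqrt_le_D)
qed

lemma measure_abs_ge_le_norm2Delta:
  fixes h :: "'a::topological_space \<Rightarrow> real"
  assumes \<Delta>: "\<Delta> \<subseteq> borel_prob_measures" and \<mu>: "\<mu> \<in> \<Delta>"
    and h: "h \<in> borel_measurable borel" and bound: "\<And>x. \<bar>h x\<bar> \<le> B" and "c > 0"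
  shows "measure \<mu> {x. c \<le> \<bar>h x\<bar>} \<le> (norm2Delta \<Delta> h)\<^sup>2 / c\<^sup>2"
proof -
  have \<mu>_prob: "\<mu> \<in> borel_prob_measures"
    using \<Delta> \<mu> by blast
  interpret prob_space \<mu>
    using \<mu>_prob by (rule borel_prob_measuresD)
  have "measure \<mu> {x\<in>space \<mu>. c \<le> \<bar>h x\<bar>} \<le> (\<integral>x. (h x)\<^sup>2 \<partial>\<mu>) / c\<^sup>2"
    using h integrable_square_of_bounded[OF \<mu>_prob h bound] \<open>c > 0\<close>
    by (intro second_moment_method) (simp_all add: borel_prob_measuresD(4)[OF \<mu>_prob])
  also have "\<dots> \<le> (norm2Delta \<Delta> h)\<^sup>2 / c\<^sup>2"
    using integral_square_le_norm2Delta[OF \<Delta> \<mu> h bound] by (simp add: divide_right_mono)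
  finally show ?thesis
    using borel_prob_measuresD(3)[OF \<mu>_prob] by simp
qed

lemma measure_zeros_clipped_correction_le:
  fixes f g :: "'a::topological_space \<Rightarrow> real"
  assumes \<Delta>: "\<Delta> \<subseteq> borel_prob_measures" and \<mu>: "\<mu> \<in> \<Delta>"
    and f: "f \<in> borel_measurable borel" and g: "g \<in> borel_measurable borel"
    and bound: "\<And>x. \<bar>f x - g x\<bar> \<le> B" and "c > 0"
  shows "measure \<mu> ((\<lambda>x. f x - max (-c) (min c (f x - g x))) -` {0})
    \<le> measure \<mu> (g -` {0}) + (norm2Delta \<Delta> (\<lambda>x. f x - g x))\<^sup>2 / c\<^sup>2"
proof -
  have \<mu>_prob: "\<mu> \<in> borel_prob_measures"
    using \<Delta> \<mu> by blast
  interpret prob_space \<mu>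
    using \<mu>_prob by (rule borel_prob_measuresD)
  have "{x\<in>space borel. g x = 0} \<in> sets borel" "{x\<in>space borel. c \<le> \<bar>f x - g x\<bar>} \<in> sets borel"
    using f g by measurable
  then have zeros_g: "g -` {0} \<in> sets \<mu>" and large: "{x. c \<le> \<bar>f x - g x\<bar>} \<in> sets \<mu>"
    by (simp_all add: borel_prob_measuresD(2)[OF \<mu>_prob] vimage_def)
  have "(\<lambda>x. f x - max (-c) (min c (f x - g x))) -` {0} \<subseteq> g -` {0} \<union> {x. c \<le> \<bar>f x - g x\<bar>}"
    by auto
  then have "measure \<mu> ((\<lambda>x. f x - max (-c) (min c (f x - g x))) -` {0})
      \<le> measure \<mu> (g -` {0} \<union> {x. c \<le> \<bar>f x - g x\<bar>})"
    using zeros_g large by (intro finite_measure_mono) auto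
  also have "\<dots> \<le> measure \<mu> (g -` {0}) + measure \<mu> {x. c \<le> \<bar>f x - g x\<bar>}"
    using zeros_g large by (rule measure_Un_le)
  also have "\<dots> \<le> measure \<mu> (g -` {0}) + (norm2Delta \<Delta> (\<lambda>x. f x - g x))\<^sup>2 / c\<^sup>2"
    using measure_abs_ge_le_norm2Delta[OF \<Delta> \<mu> borel_measurable_diff[OF f g] bound \<open>c > 0\<close>]
    by simp
  finally show ?thesis .
qed

theorem lemma2p8:
  fixes \<Delta> :: "'a::metric_space measure set"
    and f g :: "'a \<Rightarrow> real" and \<epsilon> :: real
  assumes "compact (UNIV :: 'a set)"
    and "\<Delta> \<subseteq> borel_prob_measures"
    and "closedin weak_star_topology \<Delta>"
    and "\<epsilon> > 0"
    and "continuous_on UNIV f" and "continuous_on UNIV g"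
    and "(norm2Delta \<Delta> (\<lambda>x. f x - g x))^2 < \<epsilon>^3 / 8"
    and "\<forall>\<mu>\<in>\<Delta>. measure \<mu> (g -` {0}) < \<epsilon> / 2"
  shows "\<exists>g'. continuous_on UNIV g' \<and> sup_norm (\<lambda>x. f x - g' x) < \<epsilon> \<and>
           (\<forall>\<mu>\<in>\<Delta>. measure \<mu> (g' -` {0}) < \<epsilon>)"
proof -
  define c where "c = \<epsilon> / 2"
  define g' where "g' x = f x - max (-c) (min c (f x - g x))" for x
  have c_pos: "c > 0"
    using assms(4) by (simp add: c_def)
  have "bounded (range (\<lambda>x. f x - g x))"
    using assms(1,5,6) by (intro compact_imp_bounded compact_continuous_image continuous_intros)
  then obtain B where bound: "\<And>x. \<bar>f x - g x\<bar> \<le> B"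
    unfolding bounded_real by blast
  have borel: "f \<in> borel_measurable borel" "g \<in> borel_measurable borel"
    using assms(5,6) by (auto intro: borel_measurable_continuous_onI)
  have "(norm2Delta \<Delta> (\<lambda>x. f x - g x))\<^sup>2 / c\<^sup>2 < (\<epsilon>^3 / 8) / c\<^sup>2"
    using assms(7) c_pos by (intro divide_strict_right_mono) auto
  also have "\<dots> = \<epsilon> / 2"
    using assms(4) by (simp add: c_def power2_eq_square power3_eq_cube)
  finally have ratio: "(norm2Delta \<Delta> (\<lambda>x. f x - g x))\<^sup>2 / c\<^sup>2 < \<epsilon> / 2" .
  have "sup_norm (\<lambda>x. f x - g' x) \<le> c"
    unfolding g'_def using c_pos by (intro sup_norm_le) (simp add: abs_le_iff)
  then have "sup_norm (\<lambda>x. f x - g' x) < \<epsilon>"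
    using assms(4) by (simp add: c_def)
  moreover have "continuous_on UNIV g'"
    unfolding g'_def using assms(5,6) by (intro continuous_intros)
  moreover have "measure \<mu> (g' -` {0}) < \<epsilon>" if "\<mu> \<in> \<Delta>" for \<mu>
    using measure_zeros_clipped_correction_le[OF assms(2) that borel bound c_pos]
      assms(8)[rule_format, OF that] ratio
    unfolding g'_def by linarith
  ultimately show ?thesis
    by blast
qed

end
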